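(* Let $K$ be a compact Hausdorff space without isolated points and let $U$ be a nonempty open subset of $Q_K$. Then there is a nonempty open set $V\subset K$ such that for every $v\in V$ there exists an ultrafilter $\mathfrak U_v$ on $K$ containing no first category set, with $\lim\mathfrak U_v=v$ and $\mathfrak U_v\text{-}\lim\in U$.
   Context: For a compact Hausdorff space $K$ without isolated points: $\ell_\infty(K)$ is the space of bounded real functions on $K$ with the sup norm; $m(K)=\{f\in\ell_\infty(K): \mathrm{supp}(f)\text{ is a first category set in }K\}$; $m_0(K)=\ell_\infty(K)/m(K)$ with the quotient norm, a real commutative $C^*$-algebra. $Q_K$ denotes the set of nonzero real algebra homomorphisms $m_0(K)\to\mathbb R$, with the weak$^*$ topology, so that $m_0(K)\cong C(Q_K)$. For an ultrafilter $\mathfrak U$ on $K$ containing no first category set, $\lim\mathfrak U$ is the point of $K$ to which $\mathfrak U$ converges, and $\mathfrak U\text{-}\lim\in Q_K$ is the homomorphism $[f]\mapsto\lim_{\mathfrak U}f$; every element of $Q_K$ is of this form. *)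

theory Defs
  imports "HOL-Analysis.Analysis"
begin

definition nowhere_dense :: "'a::topological_space set \<Rightarrow> bool" where
  "nowhere_dense A \<longleftrightarrow> interior (closure A) = {}"

definition first_category :: "'a::topological_space set \<Rightarrow> bool" where
  "first_category A \<longleftrightarrow>
     (\<exists>N :: nat \<Rightarrow> 'a set. (\<forall>n. nowhere_dense (N n)) \<and> A \<subseteq> (\<Union>n. N n))"

definition bdd_fun :: "('a \<Rightarrow> real) \<Rightarrow> bool" where
  "bdd_fun f \<longleftrightarrow> bounded (range f)"

definition supp :: "('a \<Rightarrow> real) \<Rightarrow> 'a set" where
  "supp f = {x. f x \<noteq> 0}"

definition mK :: "('a::topological_space \<Rightarrow> real) set" where
  "mK = {f. bdd_fun f \<and> first_category (supp f)}"

text \<open>\<open>Q_K\<close>: nonzero real algebra homomorphisms \<open>m\<^sub>0(K) = \<ell>\<^sub>\<infinity>(K)/m(K) \<rightarrow> \<real>\<close>,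
  represented by their composition with the quotient map \<open>\<ell>\<^sub>\<infinity>(K) \<rightarrow> m\<^sub>0(K)\<close>, i.e.
  as algebra homomorphisms on \<open>\<ell>\<^sub>\<infinity>(K)\<close> vanishing on \<open>m(K)\<close>
  (and normalised to be 0 outside \<open>\<ell>\<^sub>\<infinity>(K)\<close>).\<close>
definition QK :: "(('a::topological_space \<Rightarrow> real) \<Rightarrow> real) set" where
  "QK = {\<phi>.
      (\<forall>f g. bdd_fun f \<longrightarrow> bdd_fun g \<longrightarrow> \<phi> (\<lambda>x. f x + g x) = \<phi> f + \<phi> g) \<and>
      (\<forall>f c. bdd_fun f \<longrightarrow> \<phi> (\<lambda>x. c * f x) = c * \<phi> f) \<and>
      (\<forall>f g. bdd_fun f \<longrightarrow> bdd_fun g \<longrightarrow> \<phi> (\<lambda>x. f x * g x) = \<phi> f * \<phi> g) \<and>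
      (\<forall>f \<in> mK. \<phi> f = 0) \<and>
      (\<forall>f. \<not> bdd_fun f \<longrightarrow> \<phi> f = 0) \<and>
      (\<exists>f. bdd_fun f \<and> \<phi> f \<noteq> 0)}"

text \<open>Open sets of \<open>Q_K\<close> in the weak* topology (generated by evaluations at elements of \<open>m\<^sub>0(K)\<close>).\<close>
definition QK_open :: "(('a::topological_space \<Rightarrow> real) \<Rightarrow> real) set \<Rightarrow> bool" where
  "QK_open U \<longleftrightarrow> U \<subseteq> QK \<and>
     (\<forall>\<phi>\<in>U. \<exists>F \<epsilon>. finite F \<and> (\<forall>f\<in>F. bdd_fun f) \<and> \<epsilon> > 0 \<and>
        {\<psi>\<in>QK. \<forall>f\<in>F. \<bar>\<psi> f - \<phi> f\<bar> < \<epsilon>} \<subseteq> U)"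

definition is_ultrafilter :: "'a filter \<Rightarrow> bool" where
  "is_ultrafilter F \<longleftrightarrow> F \<noteq> bot \<and>
     (\<forall>A. eventually (\<lambda>x. x \<in> A) F \<or> eventually (\<lambda>x. x \<notin> A) F)"

definition ulim :: "'a filter \<Rightarrow> ('a \<Rightarrow> real) \<Rightarrow> real" where
  "ulim F = (\<lambda>f. if bdd_fun f then Lim F f else 0)"

end

(*
  Fix phi in U and a basic weak* neighbourhood {psi. \<forall>f\<in>F. |psi f - phi f| < eps} of phi
  inside U. The set S of points x with |f x - phi f| < eps/2 for all f in F is of second
  category: otherwise g = (\<Sum>f\<in>F. (f - phi f)^2), which phi annihilates, would be bounded
  away from 0 off a first category set and hence invertible in m_0(K). By Banach's category
  theorem S is of second category at every point of some nonempty open set V. For v in V, the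
  neighbourhoods of v, the set S and the complements of first category sets generate a proper
  filter; an ultrafilter refining it converges to v, contains no first category set, and its
  limit functional is within eps/2 of phi on F, hence lies in U.
*)

theory Submission
  imports Defs
begin

section \<open>Sets of first category\<close>

lemma first_category_empty [simp]: "first_category {}"
  unfolding first_category_def nowhere_dense_def by (intro exI[of _ "\<lambda>n. {}"]) simp

lemma first_category_subset: "first_category B \<Longrightarrow> A \<subseteq> B \<Longrightarrow> first_category A"
  unfolding first_category_def by blast

lemma nowhere_dense_imp_first_category: "nowhere_dense A \<Longrightarrow> first_category A"
  unfolding first_category_def by (intro exI[of _ "\<lambda>n. A"]) simp

lemma first_category_Un:
  assumes "first_category A" "first_category B"
  shows "first_category (A \<union> B)"
proof -
  obtain M N :: "nat \<Rightarrow> 'a set" where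
    M: "\<forall>n. nowhere_dense (M n)" "A \<subseteq> (\<Union>n. M n)" and
    N: "\<forall>n. nowhere_dense (N n)" "B \<subseteq> (\<Union>n. N n)"
    using assms unfolding first_category_def by metis
  define L where "L n = (if even n then M (n div 2) else N (n div 2))" for n
  have "\<forall>n. nowhere_dense (L n)"
    using M(1) N(1) by (simp add: L_def)
  moreover have "A \<union> B \<subseteq> (\<Union>n. L n)"
  proof
    fix x assume "x \<in> A \<union> B"
    then obtain k where "x \<in> M k \<or> x \<in> N k"
      using M(2) N(2) by blast
    then have "x \<in> L (2 * k) \<or> x \<in> L (2 * k + 1)"
      by (auto simp: L_def)
    then show "x \<in> (\<Union>n. L n)"
      by blast
  qed
  ultimately show ?thesis
    unfolding first_category_def by blast
qed

definition comeager :: "'a::topological_space filter" where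
  "comeager = Abs_filter (\<lambda>P. first_category {x. \<not> P x})"

lemma eventually_comeager: "eventually P comeager \<longleftrightarrow> first_category {x. \<not> P x}"
  unfolding comeager_def
proof (rule eventually_Abs_filter, rule is_filter.intro)
  fix P Q :: "'a \<Rightarrow> bool"
  assume "first_category {x. \<not> P x}" "first_category {x. \<not> Q x}"
  then have "first_category ({x. \<not> P x} \<union> {x. \<not> Q x})"
    by (rule first_category_Un)
  then show "first_category {x. \<not> (P x \<and> Q x)}"
    by (rule first_category_subset) auto
next
  fix P Q :: "'a \<Rightarrow> bool"
  assume PQ: "\<forall>x. P x \<longrightarrow> Q x" and "first_category {x. \<not> P x}"
  from this(2) show "first_category {x. \<not> Q x}"
    by (rule first_category_subset) (use PQ in auto)
qed simp

lemma nowhere_dense_Union_Int_disjoint_open: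
  assumes disj: "pairwise disjnt \<O>" and "\<forall>B\<in>\<O>. open B" and "\<forall>B\<in>\<O>. nowhere_dense (N B)"
  shows "nowhere_dense (\<Union>B\<in>\<O>. N B \<inter> B)"
proof -
  define M where "M = (\<Union>B\<in>\<O>. N B \<inter> B)"
  define I where "I = interior (closure M)"
  have "I \<inter> B = {}" if B: "B \<in> \<O>" for B
  proof -
    have "M \<inter> B \<subseteq> N B"
    proof
      fix y assume "y \<in> M \<inter> B"
      then obtain B' where "B' \<in> \<O>" "y \<in> N B'" "y \<in> B'" "y \<in> B"
        unfolding M_def by blast
      with disj B have "B' = B"
        unfolding pairwise_def disjnt_def by blast
      with \<open>y \<in> N B'\<close> show "y \<in> N B"
        by simp
    qed
    have "I \<inter> B \<subseteq> B \<inter> closure M"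
      unfolding I_def using interior_subset by blast
    also have "\<dots> \<subseteq> closure (B \<inter> M)"
      using assms(2) B by (simp add: open_Int_closure_subset)
    also have "\<dots> \<subseteq> closure (N B)"
      using \<open>M \<inter> B \<subseteq> N B\<close> by (simp add: Int_commute closure_mono)
    finally have "I \<inter> B \<subseteq> interior (closure (N B))"
      using assms(2) B unfolding I_def by (intro interior_maximal) auto
    then show ?thesis
      using assms(3) B unfolding nowhere_dense_def by blast
  qed
  then have "I \<inter> M = {}"
    unfolding M_def by blast
  then have "I \<inter> closure M = {}"
    unfolding I_def by (simp add: open_Int_closure_eq_empty)
  then have "I = {}"
    unfolding I_def using interior_subset by blast
  then show ?thesis
    unfolding nowhere_dense_def I_def M_def .
qed

lemma first_category_Int_Union_disjoint_open:
  assumes disj: "pairwise disjnt \<O>" and \<O>: "\<forall>B\<in>\<O>. open B \<and> first_category (S \<inter> B)"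
  shows "first_category (S \<inter> \<Union>\<O>)"
proof -
  obtain N :: "_ \<Rightarrow> nat \<Rightarrow> _" where
    N: "\<And>B n. B \<in> \<O> \<Longrightarrow> nowhere_dense (N B n)" "\<And>B. B \<in> \<O> \<Longrightarrow> S \<inter> B \<subseteq> (\<Union>n. N B n)"
    using \<O> unfolding first_category_def by metis
  have "S \<inter> \<Union>\<O> \<subseteq> (\<Union>n. \<Union>B\<in>\<O>. N B n \<inter> B)"
  proof
    fix x assume "x \<in> S \<inter> \<Union>\<O>"
    then obtain B where "B \<in> \<O>" "x \<in> S \<inter> B"
      by blast
    moreover from this obtain n where "x \<in> N B n"
      using N(2) by blast
    ultimately show "x \<in> (\<Union>n. \<Union>B\<in>\<O>. N B n \<inter> B)"
      by blast
  qed
  moreover have "nowhere_dense (\<Union>B\<in>\<O>. N B n \<inter> B)" for n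
    using disj \<O> N(1) by (intro nowhere_dense_Union_Int_disjoint_open) auto
  ultimately show ?thesis
    unfolding first_category_def by (intro exI[of _ "\<lambda>n. \<Union>B\<in>\<O>. N B n \<inter> B"]) simp
qed

lemma ex_maximal_disjoint_subfamily:
  "\<exists>M\<subseteq>A. pairwise disjnt M \<and> (\<forall>B\<in>A. disjnt B (\<Union>M) \<longrightarrow> B \<in> M)"
proof -
  define \<D> where "\<D> = {M. M \<subseteq> A \<and> pairwise disjnt M}"
  have "\<exists>M\<in>\<D>. \<forall>X\<in>\<D>. M \<subseteq> X \<longrightarrow> X = M"
  proof (rule Zorn_Lemma, intro ballI)
    fix C assume "C \<in> chains \<D>"
    then have C: "C \<subseteq> \<D>" "chain\<^sub>\<subseteq> C"
      unfolding chains_def by auto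
    then have "pairwise disjnt (\<Union>C)"
      by (intro pairwise_chain_Union) (auto simp: \<D>_def)
    moreover have "\<Union>C \<subseteq> A"
      using C(1) by (auto simp: \<D>_def)
    ultimately show "\<Union>C \<in> \<D>"
      by (simp add: \<D>_def)
  qed
  then obtain M where M: "M \<in> \<D>" and max: "\<And>X. X \<in> \<D> \<Longrightarrow> M \<subseteq> X \<Longrightarrow> X = M"
    by blast
  have "B \<in> M" if "B \<in> A" "disjnt B (\<Union>M)" for B
  proof -
    have "insert B M \<in> \<D>"
      using M that by (auto simp: \<D>_def pairwise_insert disjnt_def)
    then show ?thesis
      using max by blast
  qed
  then show ?thesis
    using M by (auto simp: \<D>_def)
qed

theorem Banach_category_theorem:
  assumes "\<forall>V. open V \<and> V \<noteq> {} \<longrightarrow> (\<exists>W. open W \<and> W \<noteq> {} \<and> W \<subseteq> V \<and> first_category (S \<inter> W))"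
  shows "first_category S"
proof -
  obtain M where M: "M \<subseteq> {W. open W \<and> W \<noteq> {} \<and> first_category (S \<inter> W)}" "pairwise disjnt M"
    and max: "\<And>W. open W \<Longrightarrow> W \<noteq> {} \<Longrightarrow> first_category (S \<inter> W) \<Longrightarrow> disjnt W (\<Union>M) \<Longrightarrow> W \<in> M"
    using ex_maximal_disjoint_subfamily[of "{W. open W \<and> W \<noteq> {} \<and> first_category (S \<inter> W)}"]
    by auto
  have "interior (- \<Union>M) = {}"
  proof (rule ccontr)
    assume "interior (- \<Union>M) \<noteq> {}"
    then obtain W where W: "open W" "W \<noteq> {}" "W \<subseteq> interior (- \<Union>M)" "first_category (S \<inter> W)"
      using assms by blast
    then have "disjnt W (\<Union>M)"
      using interior_subset by (force simp: disjnt_def)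
    then show False
      using max[OF W(1,2,4)] W(2) by (auto simp: disjnt_def)
  qed
  moreover have "open (\<Union>M)"
    using M(1) by auto
  ultimately have "first_category (- \<Union>M)"
    by (intro nowhere_dense_imp_first_category) (simp add: nowhere_dense_def closure_closed closed_Compl)
  moreover have "first_category (S \<inter> \<Union>M)"
    using M by (intro first_category_Int_Union_disjoint_open) auto
  ultimately show ?thesis
    by (rule first_category_subset[OF first_category_Un]) auto
qed

corollary ex_open_everywhere_second_category:
  assumes "\<not> first_category S"
  obtains V where "open V" "V \<noteq> {}"
    and "\<And>v W. v \<in> V \<Longrightarrow> open W \<Longrightarrow> v \<in> W \<Longrightarrow> \<not> first_category (S \<inter> W)"
proof -
  obtain V where V: "open V" "V \<noteq> {}"
    "\<And>W. open W \<Longrightarrow> W \<noteq> {} \<Longrightarrow> W \<subseteq> V \<Longrightarrow> \<not> first_category (S \<inter> W)"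
    using assms Banach_category_theorem[of S] by auto
  show ?thesis
  proof (rule that[OF V(1,2)])
    fix v W assume vW: "v \<in> V" "open W" "v \<in> W"
    show "\<not> first_category (S \<inter> W)"
    proof
      assume "first_category (S \<inter> W)"
      then have "first_category (S \<inter> (W \<inter> V))"
        by (rule first_category_subset) auto
      moreover have "open (W \<inter> V)" "W \<inter> V \<noteq> {}"
        using vW V(1) by auto
      ultimately show False
        using V(3)[of "W \<inter> V"] by blast
    qed
  qed
qed

section \<open>Ultrafilters\<close>

lemma is_ultrafilterD:
  assumes "is_ultrafilter F"
  shows "eventually P F \<or> eventually (\<lambda>x. \<not> P x) F"
proof -
  have "eventually (\<lambda>x. x \<in> {x. P x}) F \<or> eventually (\<lambda>x. x \<notin> {x. P x}) F"
    using assms unfolding is_ultrafilter_def by blast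
  then show ?thesis
    by simp
qed

lemma ultrafilter_le_if_inf_neq_bot:
  assumes "is_ultrafilter F" "inf G F \<noteq> bot"
  shows "F \<le> G"
proof (rule filter_leI)
  fix P assume "eventually P G"
  show "eventually P F"
  proof (rule ccontr)
    assume "\<not> eventually P F"
    then have "eventually (\<lambda>x. \<not> P x) F"
      using is_ultrafilterD[OF assms(1)] by blast
    with \<open>eventually P G\<close> have "eventually (\<lambda>x. False) (inf G F)"
      unfolding eventually_inf by blast
    with assms(2) show False
      by (simp add: trivial_limit_def)
  qed
qed

lemma is_ultrafilter_filtermap:
  assumes "is_ultrafilter F"
  shows "is_ultrafilter (filtermap f F)"
  unfolding is_ultrafilter_def eventually_filtermap
proof (intro conjI allI)
  show "filtermap f F \<noteq> bot"
    using assms by (simp add: is_ultrafilter_def filtermap_bot_iff)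
  show "eventually (\<lambda>x. f x \<in> A) F \<or> eventually (\<lambda>x. f x \<notin> A) F" for A
    using is_ultrafilterD[OF assms, of "\<lambda>x. f x \<in> A"] by simp
qed

lemma maximal_proper_filter_is_ultrafilter:
  assumes "F \<noteq> bot" and max: "\<And>G. G \<noteq> bot \<Longrightarrow> G \<le> F \<Longrightarrow> G = F"
  shows "is_ultrafilter F"
  unfolding is_ultrafilter_def
proof (intro conjI allI disjCI)
  fix A assume "\<not> eventually (\<lambda>x. x \<notin> A) F"
  then have "inf F (principal A) \<noteq> bot"
    by (simp add: trivial_limit_def eventually_inf_principal)
  then have "inf F (principal A) = F"
    by (rule max) simp
  moreover have "eventually (\<lambda>x. x \<in> A) (inf F (principal A))"
    by (simp add: eventually_inf_principal)
  ultimately show "eventually (\<lambda>x. x \<in> A) F"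
    by simp
qed fact

lemma Inf_filter_chain_neq_bot:
  fixes C :: "'a filter set"
  assumes "C \<noteq> {}" "bot \<notin> C" and chain: "\<And>G H. G \<in> C \<Longrightarrow> H \<in> C \<Longrightarrow> G \<le> H \<or> H \<le> G"
  shows "Inf C \<noteq> bot"
proof -
  have "eventually P (Inf C) \<longleftrightarrow> (\<exists>G\<in>C. eventually P G)" for P
  proof (rule eventually_Inf_base)
    fix G H assume "G \<in> C" "H \<in> C"
    then show "\<exists>L\<in>C. L \<le> inf G H"
      using chain[of G H] by (metis inf.orderE inf_commute order_refl)
  qed fact
  from this[of "\<lambda>x. False"] assms(2) show ?thesis
    by (auto simp: eventually_False)
qed

theorem ultrafilter_exists_le:
  fixes F :: "'a filter"
  assumes "F \<noteq> bot"
  obtains U where "U \<le> F" "is_ultrafilter U"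
proof -
  define \<P> where "\<P> = {G. G \<noteq> bot \<and> G \<le> F}"
  have "partial_order_on \<P> (relation_of (\<ge>) \<P>)"
    by (rule partial_order_on_relation_ofI) auto
  then have "\<exists>U\<in>\<P>. \<forall>G\<in>\<P>. U \<ge> G \<longrightarrow> G = U"
  proof (rule predicate_Zorn)
    fix C assume "C \<in> Chains (relation_of (\<ge>) \<P>)"
    then have C: "C \<subseteq> \<P>" and chain: "\<And>G H. G \<in> C \<Longrightarrow> H \<in> C \<Longrightarrow> G \<le> H \<or> H \<le> G"
      by (auto simp: Chains_def relation_of_def)
    show "\<exists>L\<in>\<P>. \<forall>G\<in>C. G \<ge> L"
    proof (cases "C = {}")
      case True
      then show ?thesis
        using assms by (auto simp: \<P>_def)
    next
      case False
      then have "Inf C \<in> \<P>"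
        using C chain Inf_filter_chain_neq_bot[OF False]
        by (auto simp: \<P>_def intro: Inf_lower2)
      then show ?thesis
        by (auto intro: Inf_lower)
    qed
  qed
  then obtain U where U: "U \<in> \<P>" and max: "\<And>G. G \<in> \<P> \<Longrightarrow> G \<le> U \<Longrightarrow> G = U"
    by blast
  have "is_ultrafilter U"
  proof (rule maximal_proper_filter_is_ultrafilter)
    show "U \<noteq> bot"
      using U by (simp add: \<P>_def)
    show "G = U" if "G \<noteq> bot" "G \<le> U" for G
      using U that by (intro max) (auto simp: \<P>_def)
  qed
  with U show ?thesis
    by (intro that) (auto simp: \<P>_def)
qed

lemma ultrafilter_tendsto_compact:
  fixes f :: "'a \<Rightarrow> 'b::topological_space"
  assumes F: "is_ultrafilter F" and "compact K" "eventually (\<lambda>x. f x \<in> K) F"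
  obtains c where "c \<in> K" "(f \<longlongrightarrow> c) F"
proof -
  have "filtermap f F \<noteq> bot"
    using F by (simp add: is_ultrafilter_def filtermap_bot_iff)
  moreover have "eventually (\<lambda>y. y \<in> K) (filtermap f F)"
    using assms(3) by (simp add: eventually_filtermap)
  ultimately obtain c where "c \<in> K" "inf (nhds c) (filtermap f F) \<noteq> bot"
    using \<open>compact K\<close> unfolding compact_filter by blast
  moreover from this(2) have "filtermap f F \<le> nhds c"
    by (rule ultrafilter_le_if_inf_neq_bot[OF is_ultrafilter_filtermap[OF F]])
  ultimately show ?thesis
    using that unfolding filterlim_def by blast
qed

section \<open>Ultrafilter limits and the characters of \<open>m\<^sub>0(K)\<close>\<close>

lemma bdd_fun_iff: "bdd_fun f \<longleftrightarrow> (\<exists>B. \<forall>x. \<bar>f x\<bar> \<le> B)"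
  unfolding bdd_fun_def bounded_iff by auto

lemma bdd_fun_const [simp]: "bdd_fun (\<lambda>x. c)"
  unfolding bdd_fun_iff by auto

lemma bdd_fun_add:
  assumes "bdd_fun f" "bdd_fun g"
  shows "bdd_fun (\<lambda>x. f x + g x)"
proof -
  obtain A B where "\<forall>x. \<bar>f x\<bar> \<le> A" "\<forall>x. \<bar>g x\<bar> \<le> B"
    using assms unfolding bdd_fun_iff by blast
  then have "\<bar>f x + g x\<bar> \<le> A + B" for x
    by (meson abs_triangle_ineq add_mono order_trans)
  then show ?thesis
    unfolding bdd_fun_iff by blast
qed

lemma bdd_fun_mult:
  assumes "bdd_fun f" "bdd_fun g"
  shows "bdd_fun (\<lambda>x. f x * g x)"
proof -
  obtain A B where "\<forall>x. \<bar>f x\<bar> \<le> A" "\<forall>x. \<bar>g x\<bar> \<le> B"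
    using assms unfolding bdd_fun_iff by blast
  then have "\<bar>f x * g x\<bar> \<le> A * B" for x
    unfolding abs_mult by (meson abs_ge_zero mult_mono order_trans)
  then show ?thesis
    unfolding bdd_fun_iff by blast
qed

lemma bdd_fun_sum: "(\<And>i. i \<in> I \<Longrightarrow> bdd_fun (f i)) \<Longrightarrow> bdd_fun (\<lambda>x. \<Sum>i\<in>I. f i x)"
proof (induction I rule: infinite_finite_induct)
  case (insert i I)
  then show ?case
    by (simp add: bdd_fun_add)
qed simp_all

lemma tendsto_ulim:
  assumes F: "is_ultrafilter F" and f: "bdd_fun f"
  shows "(f \<longlongrightarrow> ulim F f) F"
proof -
  obtain B where "\<forall>x. \<bar>f x\<bar> \<le> B"
    using f unfolding bdd_fun_iff by blast
  then have "eventually (\<lambda>x. f x \<in> cball 0 B) F"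
    by simp
  then obtain c where c: "(f \<longlongrightarrow> c) F"
    using ultrafilter_tendsto_compact[OF F compact_cball] by blast
  moreover have "F \<noteq> bot"
    using F by (simp add: is_ultrafilter_def)
  ultimately show ?thesis
    using f by (simp add: ulim_def tendsto_Lim)
qed

lemma ulim_eq: "is_ultrafilter F \<Longrightarrow> bdd_fun f \<Longrightarrow> (f \<longlongrightarrow> c) F \<Longrightarrow> ulim F f = c"
  unfolding is_ultrafilter_def ulim_def by (simp add: tendsto_Lim)

theorem ulim_in_QK:
  assumes F: "is_ultrafilter F" and "F \<le> comeager"
  shows "ulim F \<in> QK"
  unfolding QK_def
proof (intro CollectI conjI allI impI ballI)
  fix f g :: "'a \<Rightarrow> real" and c :: real
  assume f: "bdd_fun f" and g: "bdd_fun g"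
  note lim = tendsto_ulim[OF F f] tendsto_ulim[OF F g]
  show "ulim F (\<lambda>x. f x + g x) = ulim F f + ulim F g"
    by (rule ulim_eq[OF F bdd_fun_add[OF f g] tendsto_add[OF lim]])
  show "ulim F (\<lambda>x. f x * g x) = ulim F f * ulim F g"
    by (rule ulim_eq[OF F bdd_fun_mult[OF f g] tendsto_mult[OF lim]])
  show "ulim F (\<lambda>x. c * f x) = c * ulim F f"
    by (rule ulim_eq[OF F bdd_fun_mult[OF bdd_fun_const f] tendsto_mult[OF tendsto_const lim(1)]])
next
  fix f :: "'a \<Rightarrow> real"
  assume "f \<in> mK"
  then have f: "bdd_fun f" and "first_category (supp f)"
    unfolding mK_def by auto
  then have "eventually (\<lambda>x. x \<notin> supp f) comeager"
    by (simp add: eventually_comeager)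
  then have "eventually (\<lambda>x. x \<notin> supp f) F"
    by (rule filter_leD[OF \<open>F \<le> comeager\<close>])
  then have "eventually (\<lambda>x. f x = 0) F"
    by (rule eventually_mono) (simp add: supp_def)
  then show "ulim F f = 0"
    by (rule ulim_eq[OF F f tendsto_eventually])
next
  show "ulim F f = 0" if "\<not> bdd_fun f" for f :: "'a \<Rightarrow> real"
    using that by (simp add: ulim_def)
  have "ulim F (\<lambda>x. 1) = 1"
    by (rule ulim_eq[OF F bdd_fun_const tendsto_const])
  then show "\<exists>f. bdd_fun f \<and> ulim F f \<noteq> 0"
    by (intro exI[of _ "\<lambda>x. 1"]) simp
qed

lemma QK_add: "\<phi> \<in> QK \<Longrightarrow> bdd_fun f \<Longrightarrow> bdd_fun g \<Longrightarrow> \<phi> (\<lambda>x. f x + g x) = \<phi> f + \<phi> g"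
  unfolding QK_def by blast

lemma QK_scale: "\<phi> \<in> QK \<Longrightarrow> bdd_fun f \<Longrightarrow> \<phi> (\<lambda>x. c * f x) = c * \<phi> f"
  unfolding QK_def by blast

lemma QK_mult: "\<phi> \<in> QK \<Longrightarrow> bdd_fun f \<Longrightarrow> bdd_fun g \<Longrightarrow> \<phi> (\<lambda>x. f x * g x) = \<phi> f * \<phi> g"
  unfolding QK_def by blast

lemma QK_mK: "\<phi> \<in> QK \<Longrightarrow> f \<in> mK \<Longrightarrow> \<phi> f = 0"
  unfolding QK_def by blast

lemma QK_one:
  assumes "\<phi> \<in> QK"
  shows "\<phi> (\<lambda>x. 1) = 1"
proof -
  obtain f where f: "bdd_fun f" "\<phi> f \<noteq> 0"
    using assms unfolding QK_def by blast
  have "\<phi> f = \<phi> (\<lambda>x. 1) * \<phi> f"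
    using QK_mult[OF assms bdd_fun_const f(1), of 1] by simp
  with f(2) show ?thesis
    by simp
qed

lemma QK_const:
  assumes "\<phi> \<in> QK"
  shows "\<phi> (\<lambda>x. c) = c"
proof -
  have "\<phi> (\<lambda>x. c * 1) = c * \<phi> (\<lambda>x. 1)"
    by (rule QK_scale[OF assms bdd_fun_const])
  then show ?thesis
    using QK_one[OF assms] by simp
qed

lemma QK_diff_const:
  assumes "\<phi> \<in> QK" "bdd_fun f"
  shows "\<phi> (\<lambda>x. f x - c) = \<phi> f - c"
  using QK_add[OF assms bdd_fun_const, of "- c"] QK_const[OF assms(1)] by simp

lemma QK_sum:
  assumes "\<phi> \<in> QK" "finite I" "\<And>i. i \<in> I \<Longrightarrow> bdd_fun (f i)"
  shows "\<phi> (\<lambda>x. \<Sum>i\<in>I. f i x) = (\<Sum>i\<in>I. \<phi> (f i))"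
  using assms(2,3)
proof (induction I rule: finite_induct)
  case empty
  then show ?case
    using QK_const[OF assms(1), of 0] by simp
next
  case (insert i I)
  have "\<phi> (\<lambda>x. \<Sum>i\<in>insert i I. f i x) = \<phi> (\<lambda>x. f i x + (\<Sum>i\<in>I. f i x))"
    using insert.hyps by simp
  also have "\<dots> = \<phi> (f i) + \<phi> (\<lambda>x. \<Sum>i\<in>I. f i x)"
    using insert.prems by (intro QK_add[OF assms(1)] bdd_fun_sum) auto
  finally show ?case
    using insert by simp
qed

lemma QK_eq_off_first_category:
  assumes \<phi>: "\<phi> \<in> QK" and f: "bdd_fun f" and g: "bdd_fun g"
    and "first_category {x. f x \<noteq> g x}"
  shows "\<phi> f = \<phi> g"
proof -
  define h where "h x = f x + (- 1) * g x" for x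
  have "bdd_fun h"
    unfolding h_def using f g by (intro bdd_fun_add bdd_fun_mult) simp_all
  moreover have "supp h = {x. f x \<noteq> g x}"
    by (auto simp: supp_def h_def)
  ultimately have "\<phi> h = 0"
    using assms(4) by (intro QK_mK[OF \<phi>]) (simp add: mK_def)
  moreover have "\<phi> h = \<phi> f + \<phi> (\<lambda>x. (- 1) * g x)"
    unfolding h_def by (rule QK_add[OF \<phi> f bdd_fun_mult[OF bdd_fun_const g]])
  moreover have "\<phi> (\<lambda>x. (- 1) * g x) = - \<phi> g"
    using QK_scale[OF \<phi> g, of "- 1"] by simp
  ultimately show ?thesis
    by simp
qed

lemma QK_neq_0_if_ge_off_first_category:
  assumes \<phi>: "\<phi> \<in> QK" and g: "bdd_fun g" and S: "first_category S"
    and "\<delta> > 0" and ge: "\<And>x. x \<notin> S \<Longrightarrow> \<delta> \<le> g x"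
  shows "\<phi> g \<noteq> 0"
proof
  assume "\<phi> g = 0"
  define k where "k x = (if x \<in> S then 0 else 1 / g x)" for x
  have "\<bar>k x\<bar> \<le> 1 / \<delta>" for x
    using ge[of x] \<open>\<delta> > 0\<close> by (auto simp: k_def intro: divide_left_mono)
  then have k: "bdd_fun k"
    unfolding bdd_fun_iff by blast
  have "k x * g x = 1" if "x \<notin> S" for x
    using ge[OF that] \<open>\<delta> > 0\<close> that by (simp add: k_def)
  then have "{x. k x * g x \<noteq> 1} \<subseteq> S"
    by blast
  then have "\<phi> (\<lambda>x. k x * g x) = \<phi> (\<lambda>x. 1)"
    using S by (intro QK_eq_off_first_category[OF \<phi> bdd_fun_mult[OF k g] bdd_fun_const])
      (rule first_category_subset)
  moreover have "\<phi> (\<lambda>x. k x * g x) = 0"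
    using QK_mult[OF \<phi> k g] \<open>\<phi> g = 0\<close> by simp
  ultimately show False
    using QK_one[OF \<phi>] by simp
qed

theorem not_first_category_QK_approx:
  assumes \<phi>: "\<phi> \<in> QK" and "finite F" and F: "\<And>f. f \<in> F \<Longrightarrow> bdd_fun f" and "e > 0"
  shows "\<not> first_category {x. \<forall>f\<in>F. \<bar>f x - \<phi> f\<bar> < e}"
proof
  define S where "S = {x. \<forall>f\<in>F. \<bar>f x - \<phi> f\<bar> < e}"
  assume "first_category {x. \<forall>f\<in>F. \<bar>f x - \<phi> f\<bar> < e}"
  then have "first_category S"
    unfolding S_def .
  define g where "g x = (\<Sum>f\<in>F. (f x - \<phi> f) * (f x - \<phi> f))" for x
  have diff: "bdd_fun (\<lambda>x. f x - \<phi> f)" if "f \<in> F" for f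
    using bdd_fun_add[OF F[OF that] bdd_fun_const, of "- \<phi> f"] by simp
  have "bdd_fun g"
    unfolding g_def by (intro bdd_fun_sum bdd_fun_mult diff)
  moreover have "\<phi> g = 0"
  proof -
    have "\<phi> g = (\<Sum>f\<in>F. \<phi> (\<lambda>x. (f x - \<phi> f) * (f x - \<phi> f)))"
      unfolding g_def by (intro QK_sum[OF \<phi> \<open>finite F\<close>] bdd_fun_mult diff)
    also have "\<dots> = 0"
      by (intro sum.neutral ballI) (simp add: QK_mult[OF \<phi> diff diff] QK_diff_const[OF \<phi> F])
    finally show ?thesis .
  qed
  moreover have "e * e \<le> g x" if "x \<notin> S" for x
  proof -
    obtain f where f: "f \<in> F" "e \<le> \<bar>f x - \<phi> f\<bar>"
      using \<open>x \<notin> S\<close> by (auto simp: S_def not_less)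
    then have "e * e \<le> \<bar>f x - \<phi> f\<bar> * \<bar>f x - \<phi> f\<bar>"
      using \<open>e > 0\<close> by (intro mult_mono) auto
    also have "\<dots> = (f x - \<phi> f) * (f x - \<phi> f)"
      by (rule abs_mult_self_eq)
    also have "\<dots> \<le> g x"
      unfolding g_def using \<open>finite F\<close> f(1) by (intro member_le_sum) auto
    finally show ?thesis .
  qed
  moreover have "e * e > 0"
    using \<open>e > 0\<close> by simp
  ultimately show False
    using QK_neq_0_if_ge_off_first_category[OF \<phi> _ \<open>first_category S\<close>] by blast
qed

lemma abs_ulim_diff_le:
  assumes F: "is_ultrafilter F" and f: "bdd_fun f" and "eventually (\<lambda>x. \<bar>f x - c\<bar> \<le> r) F"
  shows "\<bar>ulim F f - c\<bar> \<le> r"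
proof (rule tendsto_upperbound)
  show "((\<lambda>x. \<bar>f x - c\<bar>) \<longlongrightarrow> \<bar>ulim F f - c\<bar>) F"
    by (rule tendsto_rabs[OF tendsto_diff[OF tendsto_ulim[OF F f] tendsto_const]])
  show "F \<noteq> bot"
    using F by (simp add: is_ultrafilter_def)
qed fact

lemma ultrafilter_le_comeager_avoids_first_category:
  assumes "is_ultrafilter F" "F \<le> comeager" "first_category A"
  shows "\<not> eventually (\<lambda>x. x \<in> A) F"
proof
  assume "eventually (\<lambda>x. x \<in> A) F"
  moreover have "eventually (\<lambda>x. x \<notin> A) F"
    using assms(3) by (intro filter_leD[OF assms(2)]) (simp add: eventually_comeager)
  ultimately have "eventually (\<lambda>x. False) F"
    by (rule eventually_elim2) simp
  with assms(1) show False
    by (simp add: is_ultrafilter_def)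
qed

lemma ex_ultrafilter_comeager_nhds_principal:
  assumes "\<And>W. open W \<Longrightarrow> v \<in> W \<Longrightarrow> \<not> first_category (S \<inter> W)"
  obtains F where "is_ultrafilter F" "F \<le> comeager" "F \<le> nhds v" "F \<le> principal S"
proof -
  have "inf (inf (nhds v) comeager) (principal S) \<noteq> bot"
  proof
    assume "inf (inf (nhds v) comeager) (principal S) = bot"
    then have "eventually (\<lambda>x. False) (inf (inf (nhds v) comeager) (principal S))"
      by simp
    then have "eventually (\<lambda>x. x \<notin> S) (inf (nhds v) comeager)"
      by (simp add: eventually_inf_principal)
    then obtain P Q where "eventually P (nhds v)" and Q: "eventually Q comeager"
      and PQ: "\<And>x. P x \<Longrightarrow> Q x \<Longrightarrow> x \<notin> S"
      unfolding eventually_inf by blast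
    then obtain W where W: "open W" "v \<in> W" "\<forall>x\<in>W. P x"
      unfolding eventually_nhds by blast
    have "S \<inter> W \<subseteq> {x. \<not> Q x}"
      using W(3) PQ by blast
    then have "first_category (S \<inter> W)"
      using Q unfolding eventually_comeager by (rule first_category_subset[rotated])
    with assms W(1,2) show False
      by blast
  qed
  then obtain F where F: "F \<le> inf (inf (nhds v) comeager) (principal S)" "is_ultrafilter F"
    by (rule ultrafilter_exists_le)
  from F(1) have "F \<le> comeager" "F \<le> nhds v" "F \<le> principal S"
    by (simp_all add: le_inf_iff)
  with F(2) show ?thesis
    by (rule that)
qed

lemma ex_ultrafilter_ulim_near:
  assumes Fs: "\<forall>f\<in>Fs. bdd_fun f"
    and "\<And>W. open W \<Longrightarrow> v \<in> W \<Longrightarrow> \<not> first_category ({x. \<forall>f\<in>Fs. \<bar>f x - \<phi> f\<bar> < r} \<inter> W)"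
  obtains F where "is_ultrafilter F" "\<forall>A. first_category A \<longrightarrow> \<not> eventually (\<lambda>x. x \<in> A) F"
    "F \<le> nhds v" "ulim F \<in> QK" "\<forall>f\<in>Fs. \<bar>ulim F f - \<phi> f\<bar> \<le> r"
proof -
  define S where "S = {x. \<forall>f\<in>Fs. \<bar>f x - \<phi> f\<bar> < r}"
  obtain F where F: "is_ultrafilter F" "F \<le> comeager" "F \<le> nhds v" "F \<le> principal S"
    using assms(2) unfolding S_def by (rule ex_ultrafilter_comeager_nhds_principal)
  have "\<bar>ulim F f - \<phi> f\<bar> \<le> r" if f: "f \<in> Fs" for f
  proof (rule abs_ulim_diff_le[OF F(1)])
    show "bdd_fun f"
      using Fs f by blast
    have "eventually (\<lambda>x. x \<in> S) F"
      using F(4) by (simp add: le_principal)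
    then show "eventually (\<lambda>x. \<bar>f x - \<phi> f\<bar> \<le> r) F"
      by (rule eventually_mono) (use f in \<open>auto simp: S_def less_imp_le\<close>)
  qed
  then show ?thesis
    using that F ulim_in_QK ultrafilter_le_comeager_avoids_first_category by blast
qed

theorem mainTheorem7:
  fixes U :: "(('a::t2_space \<Rightarrow> real) \<Rightarrow> real) set"
  assumes "compact (UNIV :: 'a set)"
    and "\<forall>x::'a. \<not> open {x}"
    and "QK_open U" and "U \<noteq> {}"
  shows "\<exists>V :: 'a set. open V \<and> V \<noteq> {} \<and>
           (\<forall>v\<in>V. \<exists>F. is_ultrafilter F \<and>
               (\<forall>A. first_category A \<longrightarrow> \<not> eventually (\<lambda>x. x \<in> A) F) \<and>
               F \<le> nhds v \<and> ulim F \<in> U)"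
proof -
  obtain \<phi> Fs \<epsilon> where \<phi>: "\<phi> \<in> QK" and Fs: "finite Fs" "\<forall>f\<in>Fs. bdd_fun f" and "\<epsilon> > 0"
    and nbhd: "{\<psi>\<in>QK. \<forall>f\<in>Fs. \<bar>\<psi> f - \<phi> f\<bar> < \<epsilon>} \<subseteq> U"
    using assms(3,4) unfolding QK_open_def by blast
  have "\<not> first_category {x. \<forall>f\<in>Fs. \<bar>f x - \<phi> f\<bar> < \<epsilon> / 2}"
    using \<phi> Fs \<open>\<epsilon> > 0\<close> by (intro not_first_category_QK_approx) auto
  then obtain V where "open V" "V \<noteq> {}" and V: "\<And>v W. v \<in> V \<Longrightarrow> open W \<Longrightarrow> v \<in> W \<Longrightarrow>
      \<not> first_category ({x. \<forall>f\<in>Fs. \<bar>f x - \<phi> f\<bar> < \<epsilon> / 2} \<inter> W)"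
    by (rule ex_open_everywhere_second_category) auto
  moreover have "\<exists>F. is_ultrafilter F \<and> (\<forall>A. first_category A \<longrightarrow> \<not> eventually (\<lambda>x. x \<in> A) F)
                   \<and> F \<le> nhds v \<and> ulim F \<in> U" if v: "v \<in> V" for v
  proof -
    obtain F where F: "is_ultrafilter F" "\<forall>A. first_category A \<longrightarrow> \<not> eventually (\<lambda>x. x \<in> A) F"
      "F \<le> nhds v" "ulim F \<in> QK" "\<forall>f\<in>Fs. \<bar>ulim F f - \<phi> f\<bar> \<le> \<epsilon> / 2"
      using Fs(2) V[OF v] by (rule ex_ultrafilter_ulim_near)
    have "ulim F \<in> U"
      using nbhd F(4,5) \<open>\<epsilon> > 0\<close> by fastforce
    with F show ?thesis
      by blast
  qed
  ultimately show ?thesis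
    by blast
qed

end
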